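(* Let $n,k$ be positive integers with $n \geq 2k+1$, and let $TT_n$ be the transitive (acyclic) tournament on $n$ vertices. Then \[ \mathrm{sinv}_k(TT_n) = \mathrm{sinv}'_k(TT_n) = \begin{cases} 2 & \text{if } 2k+1 \leq n < 3k,\\ 1 & \text{if } 3k \leq n. \end{cases} \]
   Context: A tournament is an orientation of a complete graph; $TT_n$ denotes the unique (up to isomorphism) acyclic tournament on $n$ vertices. For a digraph $D$ and $X \subseteq V(D)$, inverting $X$ means reversing the direction of every arc of $D$ with both endvertices in $X$. A digraph $D$ is $k$-arc-strong if for every partition $(V_1,V_2)$ of $V(D)$ into nonempty sets there are at least $k$ arcs from $V_1$ to $V_2$; it is $k$-strong if $|V(D)|\ge k+1$ and $D-S$ is strongly connected for every $S\subseteq V(D)$ with $|S|<k$. $\mathrm{sinv}'_k(D)$ (resp. $\mathrm{sinv}_k(D)$) is the minimum number of sets whose successive inversion transforms $D$ into a $k$-arc-strong (resp. $k$-strong) digraph. *)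

theory Defs
  imports Main
begin

type_synonym 'a digraph = "'a set \<times> ('a \<times> 'a) set"

definition verts :: "'a digraph \<Rightarrow> 'a set" where "verts D = fst D"
definition arcs :: "'a digraph \<Rightarrow> ('a \<times> 'a) set" where "arcs D = snd D"

definition invert :: "'a digraph \<Rightarrow> 'a set \<Rightarrow> 'a digraph" where
  "invert D X = (verts D,
     {(u,v) \<in> arcs D. \<not> (u \<in> X \<and> v \<in> X)} \<union> {(v,u) | u v. (u,v) \<in> arcs D \<and> u \<in> X \<and> v \<in> X})"

definition invert_seq :: "'a digraph \<Rightarrow> 'a set list \<Rightarrow> 'a digraph" where
  "invert_seq D Xs = foldl invert D Xs"

definition k_arc_strong :: "nat \<Rightarrow> 'a digraph \<Rightarrow> bool" where
  "k_arc_strong k D \<longleftrightarrow>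
     (\<forall>V1 V2. V1 \<noteq> {} \<and> V2 \<noteq> {} \<and> V1 \<inter> V2 = {} \<and> V1 \<union> V2 = verts D \<longrightarrow>
        card {(u,v) \<in> arcs D. u \<in> V1 \<and> v \<in> V2} \<ge> k)"

definition strongly_connected_on :: "'a digraph \<Rightarrow> 'a set \<Rightarrow> bool" where
  "strongly_connected_on D W \<longleftrightarrow>
     (\<forall>u\<in>W. \<forall>v\<in>W. (u,v) \<in> ({(x,y) \<in> arcs D. x \<in> W \<and> y \<in> W})\<^sup>*)"

definition k_strong :: "nat \<Rightarrow> 'a digraph \<Rightarrow> bool" where
  "k_strong k D \<longleftrightarrow> card (verts D) \<ge> k + 1 \<and>
     (\<forall>S \<subseteq> verts D. card S < k \<longrightarrow> strongly_connected_on D (verts D - S))"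

definition sinv_arc :: "nat \<Rightarrow> 'a digraph \<Rightarrow> nat" where
  "sinv_arc k D = (LEAST p. \<exists>Xs. length Xs = p \<and> (\<forall>X\<in>set Xs. X \<subseteq> verts D) \<and>
                        k_arc_strong k (invert_seq D Xs))"

definition sinv :: "nat \<Rightarrow> 'a digraph \<Rightarrow> nat" where
  "sinv k D = (LEAST p. \<exists>Xs. length Xs = p \<and> (\<forall>X\<in>set Xs. X \<subseteq> verts D) \<and>
                        k_strong k (invert_seq D Xs))"

definition TT :: "nat \<Rightarrow> nat digraph" where
  "TT n = ({0..<n}, {(i,j). i < j \<and> j < n})"

end

theory Submission
  imports Defs
begin

(* Lower bounds are degree counts. Vertex 0 of TT_n has no in-arcs, so one inversion is
   needed. If inverting a single set X makes TT_n k-arc-strong, then each of the first k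
   vertices (too few in-arcs otherwise) and each of the last k vertices (too few out-arcs)
   lies in X; the out-arcs of vertex 0 then lead only to the n - 2k middle vertices outside X,
   fewer than k when n < 3k.

   Upper bounds: for n \<ge> 3k invert the first and last k vertices; for n \<ge> 2k + 1 invert the
   even and then the odd vertices, which reverses exactly the arcs inside each parity class.
   After deleting fewer than k vertices, a survivor in each of the three blocks (resp. a
   surviving consecutive pair starting at an even and one starting at an odd vertex) yields a
   vertex that reaches and is reached by every vertex, so the result is k-strong.
   A k-strong digraph is k-arc-strong: deleting an endpoint of each arc of a cut with fewer
   than k arcs, avoiding a non-adjacent pair across the cut, would disconnect it. *)

abbreviation induced_arcs :: "'a digraph \<Rightarrow> 'a set \<Rightarrow> ('a \<times> 'a) set" where
  "induced_arcs D W \<equiv> {(x, y) \<in> arcs D. x \<in> W \<and> y \<in> W}"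

lemma verts_invert [simp]: "verts (invert D X) = verts D"
  by (simp add: invert_def verts_def)

lemma invert_empty [simp]: "invert D {} = D"
  by (simp add: invert_def verts_def arcs_def)

lemma verts_TT [simp]: "verts (TT n) = {0..<n}"
  by (simp add: TT_def verts_def)

lemma arcs_invert_TT:
  "arcs (invert (TT n) X) =
     {(u, v). u < n \<and> v < n \<and> (u < v \<and> \<not> (u \<in> X \<and> v \<in> X) \<or> v < u \<and> u \<in> X \<and> v \<in> X)}"
  by (auto simp: invert_def arcs_def verts_def TT_def)

lemma strongly_connected_on_if_hub:
  assumes "\<And>x. x \<in> W \<Longrightarrow> (x, c) \<in> (induced_arcs D W)\<^sup>* \<and> (c, x) \<in> (induced_arcs D W)\<^sup>*"
  shows "strongly_connected_on D W"
  unfolding strongly_connected_on_def using assms by (meson rtrancl_trans)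

lemma strongly_connected_on_cut_arc:
  assumes "strongly_connected_on D W" "x \<in> W \<inter> V" "y \<in> W - V"
  shows "\<exists>(a, b) \<in> arcs D. a \<in> W \<inter> V \<and> b \<in> W - V"
proof (rule ccontr)
  let ?R = "induced_arcs D W"
  assume "\<not> ?thesis"
  then have "?R `` V \<subseteq> V" by blast
  then have "?R\<^sup>* `` V = V" by (rule Image_closed_trancl)
  moreover have "(x, y) \<in> ?R\<^sup>*" using assms unfolding strongly_connected_on_def by blast
  ultimately show False using assms(2,3) by blast
qed

lemma finite_verts_if_k_strong:
  assumes "k_strong k D"
  shows "finite (verts D)"
proof (rule card_ge_0_finite)
  show "card (verts D) > 0" using assms by (simp add: k_strong_def)
qed

lemma k_strong_cut_card_ge_if_non_arc:
  assumes "k_strong k D" and parts: "V1 \<inter> V2 = {}" "V1 \<union> V2 = verts D"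
    and "x \<in> V1" "y \<in> V2" "(x, y) \<notin> arcs D"
  shows "k \<le> card {(u, v) \<in> arcs D. u \<in> V1 \<and> v \<in> V2}"
proof (rule ccontr)
  define F where "F = {(u, v) \<in> arcs D. u \<in> V1 \<and> v \<in> V2}"
  assume "\<not> ?thesis"
  then have "card F < k" by (simp add: F_def)
  (* Deleting from each arc of the cut an endpoint other than x keeps x and y,
     but leaves no arc from V1 to V2. *)
  define S where "S = (\<lambda>(u, v). if u = x then v else u) ` F"
  have "F \<subseteq> V1 \<times> V2" by (auto simp: F_def)
  moreover have "finite (V1 \<times> V2)"
    using finite_verts_if_k_strong[OF assms(1)] parts(2) by (metis finite_SigmaI finite_Un)
  ultimately have "finite F" by (rule finite_subset)
  then have "card S < k" unfolding S_def using \<open>card F < k\<close> by (meson card_image_le le_less_trans)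
  moreover have "S \<subseteq> V1 \<union> V2" by (auto simp: S_def F_def)
  ultimately have "strongly_connected_on D (verts D - S)"
    using assms(1) parts(2) unfolding k_strong_def by blast
  moreover have "x \<notin> S" "y \<notin> S" using assms(4-6) parts(1) by (auto simp: S_def F_def split: if_splits)
  ultimately obtain a b where "(a, b) \<in> arcs D" "a \<in> V1 - S" "b \<in> V2 - S"
    using strongly_connected_on_cut_arc[of D "verts D - S" x V1 y] assms(4,5) parts by auto
  then have "(a, b) \<in> F" by (simp add: F_def)
  then have "(\<lambda>(u, v). if u = x then v else u) (a, b) \<in> S" unfolding S_def by (rule imageI)
  with \<open>a \<in> V1 - S\<close> \<open>b \<in> V2 - S\<close> show False by (simp split: if_splits)
qed

lemma card_complete_cut:
  assumes "V1 \<times> V2 \<subseteq> arcs D" "V1 \<noteq> {}" "V2 \<noteq> {}" "V1 \<inter> V2 = {}" "V1 \<union> V2 = verts D"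
    and "finite (verts D)"
  shows "card (verts D) \<le> card {(u, v) \<in> arcs D. u \<in> V1 \<and> v \<in> V2} + 1"
proof -
  have "finite V1" "finite V2" using assms(5,6) by (metis finite_Un)+
  then have "card V1 \<ge> 1" "card V2 \<ge> 1" using assms(2,3) by (simp_all add: Suc_le_eq card_gt_0_iff)
  have "card (verts D) = card V1 + card V2"
    using assms(4,5) \<open>finite V1\<close> \<open>finite V2\<close> by (metis card_Un_disjoint)
  also have "\<dots> \<le> card V1 * card V2 + 1"
    using \<open>card V1 \<ge> 1\<close> \<open>card V2 \<ge> 1\<close> by (cases "card V1"; cases "card V2") auto
  also have "card V1 * card V2 = card (V1 \<times> V2)" by (simp add: card_cartesian_product)
  also have "V1 \<times> V2 = {(u, v) \<in> arcs D. u \<in> V1 \<and> v \<in> V2}" using assms(1) by blast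
  finally show ?thesis .
qed

lemma k_strong_imp_k_arc_strong:
  assumes "k_strong k D"
  shows "k_arc_strong k D"
  unfolding k_arc_strong_def
proof (intro allI impI, elim conjE)
  fix V1 V2
  assume parts: "V1 \<noteq> {}" "V2 \<noteq> {}" "V1 \<inter> V2 = {}" "V1 \<union> V2 = verts D"
  show "k \<le> card {(u, v) \<in> arcs D. u \<in> V1 \<and> v \<in> V2}"
  proof (cases "V1 \<times> V2 \<subseteq> arcs D")
    case True
    then show ?thesis
      using card_complete_cut[OF True parts finite_verts_if_k_strong[OF assms]] assms
      by (simp add: k_strong_def)
  next
    case False
    then obtain x y where "x \<in> V1" "y \<in> V2" "(x, y) \<notin> arcs D" by blast
    then show ?thesis using k_strong_cut_card_ge_if_non_arc[OF assms parts(3,4)] by blast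
  qed
qed

lemma k_arc_strong_in_arcs:
  assumes "k_arc_strong k D" "v \<in> verts D" "verts D \<noteq> {v}"
  shows "k \<le> card {(u, w) \<in> arcs D. u \<in> verts D - {v} \<and> w \<in> {v}}"
proof -
  have "verts D - {v} \<noteq> {} \<and> {v} \<noteq> {} \<and> (verts D - {v}) \<inter> {v} = {} \<and> (verts D - {v}) \<union> {v} = verts D"
    using assms(2,3) by auto
  from assms(1)[unfolded k_arc_strong_def, rule_format, OF this] show ?thesis .
qed

lemma k_arc_strong_out_arcs:
  assumes "k_arc_strong k D" "v \<in> verts D" "verts D \<noteq> {v}"
  shows "k \<le> card {(u, w) \<in> arcs D. u \<in> {v} \<and> w \<in> verts D - {v}}"
proof -
  have "{v} \<noteq> {} \<and> verts D - {v} \<noteq> {} \<and> {v} \<inter> (verts D - {v}) = {} \<and> {v} \<union> (verts D - {v}) = verts D"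
    using assms(2,3) by auto
  from assms(1)[unfolded k_arc_strong_def, rule_format, OF this] show ?thesis .
qed

lemma interval_ne_singleton:
  assumes "2 \<le> n"
  shows "{0..<n} \<noteq> {v :: nat}"
proof
  assume "{0..<n} = {v}"
  then have "card {0..<n} = 1" by simp
  with assms show False by simp
qed

lemma k_arc_strong_invert_TT_initial_mem:
  assumes "k_arc_strong k (invert (TT n) X)" "2 \<le> n" "v < k" "v < n"
  shows "v \<in> X"
proof (rule ccontr)
  assume "v \<notin> X"
  let ?C = "{(u, w) \<in> arcs (invert (TT n) X). u \<in> {0..<n} - {v} \<and> w \<in> {v}}"
  have "?C \<subseteq> {0..<v} \<times> {v}" using \<open>v \<notin> X\<close> by (auto simp: arcs_invert_TT)
  then have "card ?C \<le> v" using card_mono[of "{0..<v} \<times> {v}" ?C] by simp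
  moreover have "k \<le> card ?C"
    using k_arc_strong_in_arcs[OF assms(1)] assms(2,4) interval_ne_singleton by simp
  ultimately show False using \<open>v < k\<close> by linarith
qed

lemma k_arc_strong_invert_TT_final_mem:
  assumes "k_arc_strong k (invert (TT n) X)" "2 \<le> n" "n - k \<le> v" "v < n"
  shows "v \<in> X"
proof (rule ccontr)
  assume "v \<notin> X"
  let ?C = "{(u, w) \<in> arcs (invert (TT n) X). u \<in> {v} \<and> w \<in> {0..<n} - {v}}"
  have "?C \<subseteq> {v} \<times> {v<..<n}" using \<open>v \<notin> X\<close> by (auto simp: arcs_invert_TT)
  then have "card ?C \<le> n - Suc v" using card_mono[of "{v} \<times> {v<..<n}" ?C] by simp
  moreover have "k \<le> card ?C"
    using k_arc_strong_out_arcs[OF assms(1)] assms(2,4) interval_ne_singleton by simp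
  ultimately show False using \<open>n - k \<le> v\<close> \<open>v < n\<close> by linarith
qed

lemma not_k_arc_strong_TT:
  assumes "1 \<le> k" "2 \<le> n"
  shows "\<not> k_arc_strong k (TT n)"
  using k_arc_strong_invert_TT_initial_mem[of k n "{}" 0] assms by auto

lemma not_k_arc_strong_invert_TT:
  assumes "1 \<le> k" "2 \<le> n" "n < 3 * k"
  shows "\<not> k_arc_strong k (invert (TT n) X)"
proof
  assume strong: "k_arc_strong k (invert (TT n) X)"
  note initial = k_arc_strong_invert_TT_initial_mem[OF strong \<open>2 \<le> n\<close>]
  note final = k_arc_strong_invert_TT_final_mem[OF strong \<open>2 \<le> n\<close>]
  have "0 \<in> X" using initial assms by simp
  let ?C = "{(u, w) \<in> arcs (invert (TT n) X). u \<in> {0} \<and> w \<in> {0..<n} - {0}}"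
  have "?C \<subseteq> {0} \<times> {k..<n - k}"
  proof
    fix e assume "e \<in> ?C"
    then obtain w where e: "e = (0, w)" and "(0, w) \<in> arcs (invert (TT n) X)" by auto
    then have "w \<notin> X" "w < n" using \<open>0 \<in> X\<close> by (auto simp: arcs_invert_TT)
    then have "k \<le> w" "w < n - k" using initial[of w] final[of w] not_le by blast+
    with e show "e \<in> {0} \<times> {k..<n - k}" by simp
  qed
  then have "card ?C \<le> n - k - k" using card_mono[of "{0} \<times> {k..<n - k}" ?C] by simp
  moreover have "k \<le> card ?C"
    using k_arc_strong_out_arcs[OF strong, of 0] interval_ne_singleton[OF assms(2)] assms(2) by simp
  ultimately show False using \<open>n < 3 * k\<close> by linarith
qed

lemma k_strong_invert_TT_ends:
  assumes "1 \<le> k" "3 * k \<le> n"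
  shows "k_strong k (invert (TT n) ({0..<k} \<union> {n - k..<n}))" (is "k_strong k (invert _ ?X)")
  unfolding k_strong_def
proof (intro conjI allI impI)
  let ?D = "invert (TT n) ?X"
  show "k + 1 \<le> card (verts ?D)" using assms by simp
  fix S assume S: "S \<subseteq> verts ?D" "card S < k"
  let ?W = "verts ?D - S"
  let ?R = "induced_arcs ?D ?W"
  have "finite S" using S(1) finite_subset by auto
  have avoid: "\<exists>x\<in>B. x \<notin> S" if "card S < card B" for B
    using card_mono[OF \<open>finite S\<close>, of B] that by fastforce
  obtain a m b where bounds: "a < k" "k \<le> m" "m < n - k" "n - k \<le> b" "b < n"
    and "a \<notin> S" "m \<notin> S" "b \<notin> S"
    using avoid[of "{0..<k}"] avoid[of "{k..<n - k}"] avoid[of "{n - k..<n}"] S(2) assms(2)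
    by force
  have "a \<in> ?W" "m \<in> ?W" "b \<in> ?W"
    using \<open>a \<notin> S\<close> \<open>m \<notin> S\<close> \<open>b \<notin> S\<close> bounds assms(2) by auto
  have arc: "(x, y) \<in> ?R\<^sup>*"
    if "x \<in> ?W" "y \<in> ?W" "x < y \<and> \<not> (x \<in> ?X \<and> y \<in> ?X) \<or> y < x \<and> x \<in> ?X \<and> y \<in> ?X" for x y
    using that by (intro r_into_rtrancl) (auto simp: arcs_invert_TT)
  (* a \<rightarrow> m \<rightarrow> b \<rightarrow> a is a cycle, and every vertex has an arc to it and an arc from it *)
  have cycle: "(a, m) \<in> ?R\<^sup>*" "(m, b) \<in> ?R\<^sup>*" "(b, a) \<in> ?R\<^sup>*"
    using arc[OF \<open>a \<in> ?W\<close> \<open>m \<in> ?W\<close>] arc[OF \<open>m \<in> ?W\<close> \<open>b \<in> ?W\<close>] arc[OF \<open>b \<in> ?W\<close> \<open>a \<in> ?W\<close>]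
      bounds by auto
  show "strongly_connected_on ?D ?W"
  proof (rule strongly_connected_on_if_hub)
    fix x assume "x \<in> ?W"
    consider "x < k" | "k \<le> x" "x < n - k" | "n - k \<le> x" by linarith
    then show "(x, a) \<in> ?R\<^sup>* \<and> (a, x) \<in> ?R\<^sup>*"
    proof cases
      case 1
      then have "(x, m) \<in> ?R\<^sup>*" "(b, x) \<in> ?R\<^sup>*"
        using arc[OF \<open>x \<in> ?W\<close> \<open>m \<in> ?W\<close>] arc[OF \<open>b \<in> ?W\<close> \<open>x \<in> ?W\<close>]
          bounds assms(2) by auto
      then show ?thesis using cycle by (meson rtrancl_trans)
    next
      case 2
      then have "(x, b) \<in> ?R\<^sup>*" "(a, x) \<in> ?R\<^sup>*"
        using arc[OF \<open>x \<in> ?W\<close> \<open>b \<in> ?W\<close>] arc[OF \<open>a \<in> ?W\<close> \<open>x \<in> ?W\<close>]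
          bounds by auto
      then show ?thesis using cycle by (meson rtrancl_trans)
    next
      case 3
      then have "(x, a) \<in> ?R\<^sup>*" "(m, x) \<in> ?R\<^sup>*"
        using arc[OF \<open>x \<in> ?W\<close> \<open>a \<in> ?W\<close>] arc[OF \<open>m \<in> ?W\<close> \<open>x \<in> ?W\<close>]
          \<open>x \<in> ?W\<close> bounds assms(2) by auto
      then show ?thesis using cycle by (meson rtrancl_trans)
    qed
  qed
qed

definition parity_inversion :: "nat \<Rightarrow> nat digraph" where
  "parity_inversion n = invert_seq (TT n) [{i \<in> {0..<n}. even i}, {i \<in> {0..<n}. odd i}]"

lemma verts_parity_inversion [simp]: "verts (parity_inversion n) = {0..<n}"
  by (simp add: parity_inversion_def invert_seq_def)

lemma arcs_parity_inversion:
  "arcs (parity_inversion n) = {(u, v). u < n \<and> v < n \<and> (if even u = even v then v < u else u < v)}"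
  by (auto simp: parity_inversion_def invert_seq_def invert_def arcs_def verts_def TT_def)

lemma parity_inversion_reach_consecutive:
  assumes "W \<subseteq> {0..<n}" "c \<in> W" "Suc c \<in> W" "x \<in> W"
  shows "(x, Suc c) \<in> (induced_arcs (parity_inversion n) W)\<^sup>*"
    and "(c, x) \<in> (induced_arcs (parity_inversion n) W)\<^sup>*"
proof -
  let ?R = "induced_arcs (parity_inversion n) W"
  have arc: "(u, v) \<in> ?R" if "u \<in> W" "v \<in> W" "if even u = even v then v < u else u < v" for u v
    using that assms(1) by (auto simp: arcs_parity_inversion)
  have "(c, Suc c) \<in> ?R" using arc assms(2,3) by simp
  moreover have "x = Suc c \<or> (x, Suc c) \<in> ?R \<or> (x, c) \<in> ?R"
  proof -
    have "x = Suc c \<or> (if even x = even (Suc c) then Suc c < x else x < Suc c)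
        \<or> (if even x = even c then c < x else x < c)" by presburger
    then show ?thesis using arc[OF assms(4) assms(3)] arc[OF assms(4) assms(2)] by blast
  qed
  moreover have "x = c \<or> (c, x) \<in> ?R \<or> (Suc c, x) \<in> ?R"
  proof -
    have "x = c \<or> (if even c = even x then x < c else c < x)
        \<or> (if even (Suc c) = even x then x < Suc c else Suc c < x)" by presburger
    then show ?thesis using arc[OF assms(2) assms(4)] arc[OF assms(3) assms(4)] by blast
  qed
  ultimately show "(x, Suc c) \<in> ?R\<^sup>*" "(c, x) \<in> ?R\<^sup>*"
    by (meson converse_rtrancl_into_rtrancl r_into_rtrancl rtrancl.rtrancl_refl)+
qed

lemma ex_consecutive_pair_notin:
  assumes "finite S" "card S < m"
  shows "\<exists>j<m. r + 2 * j \<notin> S \<and> Suc (r + 2 * j) \<notin> S"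
proof (rule ccontr)
  assume "\<not> ?thesis"
  then have "{..<m} \<subseteq> (\<lambda>x. (x - r) div 2) ` S" by force
  then have "m \<le> card S"
    using card_mono[OF finite_imageI[OF assms(1)]] card_image_le[OF assms(1)] by (metis card_lessThan le_trans)
  with assms(2) show False by simp
qed

lemma k_strong_parity_inversion:
  assumes "2 * k + 1 \<le> n"
  shows "k_strong k (parity_inversion n)"
  unfolding k_strong_def
proof (intro conjI allI impI)
  show "k + 1 \<le> card (verts (parity_inversion n))" using assms by simp
  fix S assume S: "S \<subseteq> verts (parity_inversion n)" "card S < k"
  let ?W = "{0..<n} - S"
  let ?R = "induced_arcs (parity_inversion n) ?W"
  have "finite S" using S(1) finite_subset by auto
  obtain i j where "i < k" "2 * i \<notin> S" "Suc (2 * i) \<notin> S" and "j < k" "Suc (2 * j) \<notin> S" "Suc (Suc (2 * j)) \<notin> S"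
    using ex_consecutive_pair_notin[OF \<open>finite S\<close> S(2), of 0]
      ex_consecutive_pair_notin[OF \<open>finite S\<close> S(2), of 1] by auto
  define c d where "c = 2 * i" and "d = Suc (2 * j)"
  have W: "c \<in> ?W" "Suc c \<in> ?W" "d \<in> ?W" "Suc d \<in> ?W"
    using \<open>i < k\<close> \<open>j < k\<close> assms \<open>2 * i \<notin> S\<close> \<open>Suc (2 * i) \<notin> S\<close> \<open>Suc (2 * j) \<notin> S\<close>
      \<open>Suc (Suc (2 * j)) \<notin> S\<close> by (auto simp: c_def d_def)
  note reach_c = parity_inversion_reach_consecutive[of ?W n c, OF _ W(1,2)]
  note reach_d = parity_inversion_reach_consecutive[of ?W n d, OF _ W(3,4)]
  have arc: "(u, v) \<in> ?R\<^sup>*" if "u \<in> ?W" "v \<in> ?W" "if even u = even v then v < u else u < v" for u v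
    using that by (intro r_into_rtrancl) (auto simp: arcs_parity_inversion)
  (* Since c and d have different parities, Suc c \<rightarrow> d or Suc d \<rightarrow> c is an arc, leading from
     a vertex reached by all to a vertex reaching all. *)
  show "strongly_connected_on (parity_inversion n) (verts (parity_inversion n) - S)"
  proof (cases "d \<le> c")
    case True
    then have "(Suc c, d) \<in> ?R\<^sup>*" using arc[OF W(2,3)] by (simp add: c_def d_def)
    then show ?thesis using reach_c reach_d
      by (intro strongly_connected_on_if_hub[where c = d]) (auto intro: rtrancl_trans)
  next
    case False
    then have "(Suc d, c) \<in> ?R\<^sup>*" using arc[OF W(4,1)] by (simp add: c_def d_def)
    then show ?thesis using reach_c reach_d
      by (intro strongly_connected_on_if_hub[where c = c]) (auto intro: rtrancl_trans)
  qed
qed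

lemma sinv_and_sinv_arc_eqI:
  assumes "length Xs = p" "\<forall>X\<in>set Xs. X \<subseteq> verts D" "k_strong k (invert_seq D Xs)"
    and "\<And>Ys. k_arc_strong k (invert_seq D Ys) \<Longrightarrow> p \<le> length Ys"
  shows "sinv k D = p" "sinv_arc k D = p"
proof -
  show "sinv k D = p" unfolding sinv_def
  proof (rule Least_equality)
    show "\<exists>Ys. length Ys = p \<and> (\<forall>Y\<in>set Ys. Y \<subseteq> verts D) \<and> k_strong k (invert_seq D Ys)"
      using assms(1-3) by blast
  next
    fix q assume "\<exists>Ys. length Ys = q \<and> (\<forall>Y\<in>set Ys. Y \<subseteq> verts D) \<and> k_strong k (invert_seq D Ys)"
    then obtain Ys where "length Ys = q" "\<forall>Y\<in>set Ys. Y \<subseteq> verts D" "k_strong k (invert_seq D Ys)"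
      by blast
    then show "p \<le> q" using assms(4)[of Ys] k_strong_imp_k_arc_strong by blast
  qed
  show "sinv_arc k D = p" unfolding sinv_arc_def
  proof (rule Least_equality)
    have "k_arc_strong k (invert_seq D Xs)" using assms(3) by (rule k_strong_imp_k_arc_strong)
    then show "\<exists>Ys. length Ys = p \<and> (\<forall>Y\<in>set Ys. Y \<subseteq> verts D) \<and> k_arc_strong k (invert_seq D Ys)"
      using assms(1,2) by blast
  next
    fix q assume "\<exists>Ys. length Ys = q \<and> (\<forall>Y\<in>set Ys. Y \<subseteq> verts D) \<and> k_arc_strong k (invert_seq D Ys)"
    then show "p \<le> q" using assms(4) by blast
  qed
qed

theorem theorem5p9:
  fixes n k :: nat
  assumes "k \<ge> 1" and "n \<ge> 2 * k + 1"
  shows "sinv k (TT n) = sinv_arc k (TT n) \<and>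
         sinv_arc k (TT n) = (if n < 3 * k then 2 else 1)"
proof -
  define p :: nat where "p = (if n < 3 * k then 2 else 1)"
  have lower: "p \<le> length Xs" if "k_arc_strong k (invert_seq (TT n) Xs)" for Xs
  proof (cases Xs rule: remdups_adj.cases)
    case 1
    then show ?thesis using that not_k_arc_strong_TT assms by (simp add: invert_seq_def)
  next
    case (2 X)
    then show ?thesis using that not_k_arc_strong_invert_TT[of k n X] assms
      by (auto simp: p_def invert_seq_def)
  next
    case (3 X Y Zs)
    then show ?thesis by (simp add: p_def)
  qed
  obtain Xs where Xs: "length Xs = p" "\<forall>X\<in>set Xs. X \<subseteq> verts (TT n)" "k_strong k (invert_seq (TT n) Xs)"
  proof (cases "n < 3 * k")
    case True
    have "k_strong k (parity_inversion n)" using assms(2) by (rule k_strong_parity_inversion)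
    with True show ?thesis
      by (intro that[of "[{i \<in> {0..<n}. even i}, {i \<in> {0..<n}. odd i}]"])
        (auto simp: p_def parity_inversion_def)
  next
    case False
    then have "k_strong k (invert (TT n) ({0..<k} \<union> {n - k..<n}))"
      using assms(1) by (intro k_strong_invert_TT_ends) auto
    with False show ?thesis
      by (intro that[of "[{0..<k} \<union> {n - k..<n}]"]) (auto simp: p_def invert_seq_def)
  qed
  have "sinv k (TT n) = p" "sinv_arc k (TT n) = p"
    by (rule sinv_and_sinv_arc_eqI[OF Xs], erule lower)+
  then show ?thesis by (simp add: p_def)
qed

end
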